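(* Let $n>2$, $V=\mathbb{F}_2^n$, and let $W\le V$ with $\dim(W)=n-2$. Let $\phi\in\mathrm{Sym}(V)$ be an involution centralising $\sigma_W$ and such that $\phi$ maps no coset of $W$ in $V$ to itself. Then $\phi\in\mathrm{AGL}(V)$.
   Context: For $v\in V$, $\sigma_v:x\mapsto x+v$, and $\sigma_W=\{\sigma_w:w\in W\}$. Any permutation centralising $\sigma_W$ permutes the cosets of $W$. $\mathrm{AGL}(V)$ is the affine group of maps $x\mapsto xL+v$, $L\in\mathrm{GL}(V)$, $v\in V$. *)

theory Defs
  imports "HOL-Analysis.Analysis" "HOL-Library.Z2"
begin

text \<open>V = F_2^n is modelled as bit ^ 'n with n = CARD('n).
  Translation by v: x maps to x + v.\<close>

definition transl :: "'a::plus \<Rightarrow> 'a \<Rightarrow> 'a" where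
  "transl v = (\<lambda>x. x + v)"

definition AGL :: "(bit ^ 'n \<Rightarrow> bit ^ 'n) set" where
  "AGL = {f. \<exists>L v. Vector_Spaces.linear (*s) (*s) L \<and> bij L \<and> (\<forall>x. f x = L x + v)}"

end

theory Submission imports Defs begin

text \<open>
  Put \<open>disp x = \<phi> x + x\<close>. Commuting with the translations by \<open>W\<close> makes \<open>disp\<close> constant
  on the cosets of \<open>W\<close>, the hypothesis on cosets says \<open>disp x \<notin> W\<close>, and \<open>\<phi>\<^sup>2 = 1\<close> gives
  \<open>disp (\<phi> x) = disp x\<close>. With \<open>u = disp 0\<close> and \<open>H = W + \<langle>u\<rangle>\<close>, a hyperplane since \<open>W\<close>
  has codimension 2, one finds \<open>disp = u\<close> on \<open>H\<close> and \<open>disp = u + d\<close> off \<open>H\<close> for a single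
  \<open>d \<in> W\<close>. Hence \<open>\<phi> x = L x + u\<close>, where the shear \<open>L\<close> fixes \<open>H\<close> pointwise and adds \<open>d\<close>
  off \<open>H\<close>; \<open>L\<close> is linear because \<open>H\<close> has index 2, and it is an involution.
\<close>

lemma bit_cases: "(k::bit) = 0 \<or> k = 1"
  using bit_not_zero_iff by blast

lemma bit_vec_add_self [simp]: "(x::bit^'n) + x = 0"
  by (simp add: vec_eq_iff)

lemma bit_vec_add_self_left [simp]: "(x::bit^'n) + (x + y) = y"
  by (simp add: vec_eq_iff)

lemma bit_vec_diff_eq_add: "(x::bit^'n) - y = x + y"
  by (simp add: vec_eq_iff)

lemma span_insert_subspace_iff:
  fixes S :: "(bit^'n) set"
  assumes "vec.subspace S"
  shows "x \<in> vec.span (insert a S) \<longleftrightarrow> x \<in> S \<or> x + a \<in> S"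
proof -
  have "vec.span S = S"
    using assms by simp
  then have "x \<in> vec.span (insert a S) \<longleftrightarrow> (\<exists>k. x + k *s a \<in> S)"
    unfolding vec.span_breakdown_eq bit_vec_diff_eq_add by (rule arg_cong)
  also have "\<dots> \<longleftrightarrow> x \<in> S \<or> x + a \<in> S"
  proof
    assume "\<exists>k. x + k *s a \<in> S"
    then obtain k where "x + k *s a \<in> S" ..
    then show "x \<in> S \<or> x + a \<in> S"
      using bit_cases[of k] by auto
  next
    assume "x \<in> S \<or> x + a \<in> S"
    then have "x + 0 *s a \<in> S \<or> x + 1 *s a \<in> S"
      by simp
    then show "\<exists>k. x + k *s a \<in> S" by blast
  qed
  finally show ?thesis .
qed

lemma subspace_translate_eq:
  fixes S :: "('a::field^'n) set"
  assumes "vec.subspace S" "a \<in> S"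
  shows "(+) a ` S = S"
proof (intro equalityI subsetI)
  fix y
  assume "y \<in> (+) a ` S"
  then show "y \<in> S"
    using vec.subspace_add[OF assms] by blast
next
  fix y
  assume "y \<in> S"
  then have "y - a \<in> S"
    using vec.subspace_diff[OF assms(1) _ assms(2)] by blast
  then show "y \<in> (+) a ` S"
    by (rule rev_image_eqI) simp
qed

lemma span_insert2_eq_UNIV_of_codim_two:
  fixes W :: "('a::field^'n) set"
  assumes "vec.subspace W" "vec.dim W + 2 = CARD('n)"
    and "p \<notin> W" "s \<notin> vec.span (insert p W)"
  shows "vec.span (insert s (insert p W)) = UNIV"
proof -
  have "p \<notin> vec.span W"
    using assms(1,3) vec.span_eq_iff by blast
  then have "vec.dim (insert s (insert p W)) = vec.dim W + 2"
    using assms(4) by (simp add: vec.dim_insert)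
  then have "vec.dim (insert s (insert p W)) = vec.dim (UNIV :: ('a^'n) set)"
    using assms(2) vec_dim_card[where 'a='a and 'n='n] by simp
  then show ?thesis
    by (metis vec.dim_eq_full vec.dim_UNIV vec.dimension_def)
qed

lemma codim_two_hyperplane_index_two:
  fixes W :: "(bit^'n) set" and p :: "bit^'n"
  defines "H \<equiv> vec.span (insert p W)"
  assumes "vec.subspace W" "vec.dim W + 2 = CARD('n)" "p \<notin> W"
    and "x \<notin> H" "y \<notin> H"
  shows "x + y \<in> H"
proof -
  have "y \<in> vec.span (insert x (insert p W))"
    using span_insert2_eq_UNIV_of_codim_two assms by blast
  then obtain k where "y + k *s x \<in> H"
    unfolding H_def vec.span_breakdown_eq bit_vec_diff_eq_add by blast
  moreover have "y + 0 *s x \<notin> H"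
    using assms(6) by simp
  ultimately have "y + x \<in> H"
    using bit_cases[of k] by auto
  then show ?thesis
    by (simp add: add.commute)
qed

definition shear :: "(bit^'n) set \<Rightarrow> bit^'n \<Rightarrow> bit^'n \<Rightarrow> bit^'n" where
  "shear H d x = (if x \<in> H then x else x + d)"

lemma shear_shear:
  assumes "vec.subspace H" "d \<in> H"
  shows "shear H d (shear H d x) = x"
proof (cases "x \<in> H")
  case False
  then have "x + d \<notin> H"
    using vec.subspace_add[OF assms(1) _ assms(2), of "x + d"] by (auto simp: add.assoc)
  with False show ?thesis
    by (simp add: shear_def add.assoc)
qed (simp add: shear_def)

lemma linear_shear:
  assumes "vec.subspace H" "d \<in> H"
    and "\<And>x y. x \<notin> H \<Longrightarrow> y \<notin> H \<Longrightarrow> x + y \<in> H"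
  shows "Vector_Spaces.linear (*s) (*s) (shear H d)"
proof -
  have add: "shear H d (x + y) = shear H d x + shear H d y" for x y
    using assms vec.subspace_add[OF assms(1)] unfolding shear_def
    by (smt (verit) add.assoc add.commute bit_vec_add_self_left)
  have scale: "shear H d (c *s x) = c *s shear H d x" for c x
    using bit_cases[of c] vec.subspace_0[OF assms(1)] by (auto simp: shear_def)
  show ?thesis
    unfolding Vector_Spaces.linear_iff using add scale vec.vector_space_axioms by blast
qed

lemma AGL_if_eq_shear:
  assumes "vec.subspace H" "d \<in> H"
    and "\<And>x y. x \<notin> H \<Longrightarrow> y \<notin> H \<Longrightarrow> x + y \<in> H"
    and "\<And>x. f x = shear H d x + v"
  shows "f \<in> AGL"
proof -
  have "bij (shear H d)"
    using shear_shear[OF assms(1,2)] by (metis bij_betw_byWitness subset_UNIV surj_def)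
  then show ?thesis
    unfolding AGL_def using linear_shear[OF assms(1-3)] assms(4) by blast
qed

locale coset_swapping_involution =
  fixes W :: "(bit^'n) set" and \<phi> :: "bit^'n \<Rightarrow> bit^'n"
  assumes subspace_W: "vec.subspace W"
    and codim_two: "vec.dim W + 2 = CARD('n)"
    and involution: "\<phi> (\<phi> x) = x"
    and commutes_transl: "w \<in> W \<Longrightarrow> \<phi> (x + w) = \<phi> x + w"
    and no_coset_fixed: "\<phi> ` ((\<lambda>w. x + w) ` W) \<noteq> (\<lambda>w. x + w) ` W"
begin

definition disp :: "bit^'n \<Rightarrow> bit^'n" where
  "disp x = \<phi> x + x"

definition H :: "(bit^'n) set" where
  "H = vec.span (insert (disp 0) W)"

lemma phi_eq: "\<phi> x = x + disp x"
  by (simp add: disp_def add.commute)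

lemma disp_add:
  assumes "w \<in> W"
  shows "disp (x + w) = disp x"
  unfolding disp_def commutes_transl[OF assms] by (simp add: add_ac)

lemma disp_phi: "disp (\<phi> x) = disp x"
  by (simp add: disp_def involution add.commute)

lemma disp_notin: "disp x \<notin> W"
proof
  assume disp_W: "disp x \<in> W"
  have "(+) (disp x) ` W = W"
    using subspace_W disp_W by (rule subspace_translate_eq)
  moreover have "\<phi> (x + w) = x + (disp x + w)" if "w \<in> W" for w
    unfolding commutes_transl[OF that] phi_eq[of x] by (simp add: add.assoc)
  then have "\<phi> ` ((\<lambda>w. x + w) ` W) = (\<lambda>w. x + w) ` ((+) (disp x) ` W)"
    unfolding image_image by (rule image_cong[OF refl])
  ultimately show False
    using no_coset_fixed[of x] by (simp only:)
qed

lemma H_subspace: "vec.subspace H"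
  unfolding H_def by (rule vec.subspace_span)

lemma in_H_iff: "x \<in> H \<longleftrightarrow> x \<in> W \<or> x + disp 0 \<in> W"
  unfolding H_def using span_insert_subspace_iff[OF subspace_W] .

lemma H_index_two: "x \<notin> H \<Longrightarrow> y \<notin> H \<Longrightarrow> x + y \<in> H"
  unfolding H_def
  using codim_two_hyperplane_index_two[OF subspace_W codim_two disp_notin] .

lemma disp_on_H:
  assumes "h \<in> H"
  shows "disp h = disp 0"
proof -
  have "h \<in> W \<or> h + disp 0 \<in> W"
    using assms in_H_iff by blast
  then show ?thesis
  proof
    assume "h \<in> W"
    then show ?thesis
      using disp_add[of h 0] by simp
  next
    assume "h + disp 0 \<in> W"
    then have "disp (\<phi> 0 + (h + disp 0)) = disp (\<phi> 0)"
      by (rule disp_add)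
    moreover have "\<phi> 0 + (h + disp 0) = h"
      by (simp add: phi_eq[of 0] vec_eq_iff)
    ultimately show ?thesis
      using disp_phi[of 0] by metis
  qed
qed

lemma disp_off_H_congruent:
  assumes "x \<notin> H"
  shows "disp x + disp 0 \<in> W"
proof (cases "disp x \<in> H")
  case True
  then show ?thesis
    using in_H_iff disp_notin by blast
next
  case False
  then have "\<phi> x \<in> H"
    using H_index_two[OF assms] by (simp add: phi_eq[of x])
  then have "disp x = disp 0"
    using disp_on_H disp_phi by metis
  then show ?thesis
    using vec.subspace_0[OF subspace_W] by simp
qed

lemma disp_const_off_H:
  assumes "x \<notin> H" "y \<notin> H"
  shows "disp y = disp x"
proof -
  have "x + y \<in> W \<or> x + y + disp 0 \<in> W"
    using H_index_two[OF assms] in_H_iff by blast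
  then show ?thesis
  proof
    assume "x + y \<in> W"
    then show ?thesis
      using disp_add[of "x + y" x] by simp
  next
    assume "x + y + disp 0 \<in> W"
    then have "(x + y + disp 0) + (disp x + disp 0) \<in> W"
      using vec.subspace_add[OF subspace_W] disp_off_H_congruent[OF assms(1)] by blast
    then have "disp (\<phi> x + ((x + y + disp 0) + (disp x + disp 0))) = disp (\<phi> x)"
      by (rule disp_add)
    moreover have "\<phi> x + ((x + y + disp 0) + (disp x + disp 0)) = y"
      by (simp add: phi_eq[of x] vec_eq_iff)
    ultimately show ?thesis
      using disp_phi[of x] by metis
  qed
qed

lemma disp_off_H_eq_const:
  obtains d where "d \<in> W" "\<And>x. x \<notin> H \<Longrightarrow> disp x = d + disp 0"
proof (cases "H = UNIV")
  case True
  then show ?thesis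
    using that[of 0] vec.subspace_0[OF subspace_W] by blast
next
  case False
  then obtain x\<^sub>0 where x\<^sub>0: "x\<^sub>0 \<notin> H" by blast
  show ?thesis
    using that[of "disp x\<^sub>0 + disp 0"] disp_off_H_congruent[OF x\<^sub>0] disp_const_off_H[OF x\<^sub>0]
    by (simp add: add.assoc)
qed

lemma phi_eq_shear:
  obtains d where "d \<in> W" "\<And>x. \<phi> x = shear H d x + disp 0"
proof -
  obtain d where d: "d \<in> W" and off_H: "\<And>x. x \<notin> H \<Longrightarrow> disp x = d + disp 0"
    using disp_off_H_eq_const by blast
  have "\<phi> x = shear H d x + disp 0" for x
    unfolding phi_eq[of x] shear_def
    using disp_on_H[of x] off_H[of x] by (cases "x \<in> H") (simp_all add: add.assoc)
  then show ?thesis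
    using that d by blast
qed

lemma phi_in_AGL: "\<phi> \<in> AGL"
proof -
  obtain d where "d \<in> W" and \<phi>_eq: "\<And>x. \<phi> x = shear H d x + disp 0"
    using phi_eq_shear by blast
  moreover have "W \<subseteq> H"
    unfolding H_def by (rule subset_trans[OF subset_insertI vec.span_superset])
  ultimately show ?thesis
    using AGL_if_eq_shear[OF H_subspace _ H_index_two \<phi>_eq] by blast
qed

end

theorem mainTheorem6:
  fixes W :: "(bit ^ 'n) set" and \<phi> :: "bit ^ 'n \<Rightarrow> bit ^ 'n"
  assumes "CARD('n) > 2"
    and "vec.subspace W"
    and "vec.dim W = CARD('n) - 2"
    and "bij \<phi>"
    and "\<phi> \<circ> \<phi> = id" and "\<phi> \<noteq> id"
    and "\<forall>w\<in>W. \<phi> \<circ> transl w = transl w \<circ> \<phi>"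
    and "\<forall>x. \<phi> ` ((\<lambda>w. x + w) ` W) \<noteq> (\<lambda>w. x + w) ` W"
  shows "\<phi> \<in> AGL"
proof -
  have "\<phi> (x + w) = \<phi> x + w" if "w \<in> W" for x w
    using assms(7) that by (simp add: fun_eq_iff transl_def)
  moreover have "\<phi> (\<phi> x) = x" for x
    using assms(5) by (simp add: fun_eq_iff)
  ultimately interpret coset_swapping_involution W \<phi>
    using assms(1-3,8) by unfold_locales auto
  show ?thesis
    by (rule phi_in_AGL)
qed

end
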